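(* Let $X$ be a Banach space. (a) If $X$ is $(1,k)$-$\mathrm{SQ}_1$ for some $k\in(0,1]$ (in particular, if $X$ is $(1,<1)$-$\mathrm{SQ}_{<\aleph_0}$), then the closed unit ball $B_X$ has no extreme points. (b) If $X$ is $(k,1)$-$\mathrm{SQ}_1$ for some $k\in(0,1]$ (in particular, if $X$ is $(<1,1)$-$\mathrm{SQ}_{<\aleph_0}$), then $X$ is not strictly convex.
   Context: For $r,s\in(0,1]$: $X$ is $(r,s)$-$\mathrm{SQ}_{1}$ if for every set $A\subset S_X$ with $|A|\le 1$ there exists $y\in S_X$ with $\|rx\pm sy\|\le 1$ for all $x\in A$; $X$ is $(r,s)$-$\mathrm{SQ}_{<\aleph_0}$ if the same holds for every finite $A\subset S_X$. $X$ is $(1,<1)$-$\mathrm{SQ}_{<\aleph_0}$ if it is $(1,t)$-$\mathrm{SQ}_{<\aleph_0}$ for every $t\in(0,1)$, and $(<1,1)$-$\mathrm{SQ}_{<\aleph_0}$ if it is $(t,1)$-$\mathrm{SQ}_{<\aleph_0}$ for every $t\in(0,1)$. *)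

theory Defs
  imports "HOL-Analysis.Analysis"
begin

text \<open>The space X is the type 'a (a real Banach space); its unit sphere is sphere 0 1
  and its closed unit ball is cball 0 1.\<close>

definition SQ_1 :: "'a::real_normed_vector itself \<Rightarrow> real \<Rightarrow> real \<Rightarrow> bool" where
  "SQ_1 _ r s \<longleftrightarrow>
     (\<forall>A::'a set. A \<subseteq> sphere 0 1 \<and> finite A \<and> card A \<le> 1 \<longrightarrow>
        (\<exists>y\<in>sphere 0 1. \<forall>x\<in>A. norm (r *\<^sub>R x + s *\<^sub>R y) \<le> 1 \<and> norm (r *\<^sub>R x - s *\<^sub>R y) \<le> 1))"

definition SQ_fin :: "'a::real_normed_vector itself \<Rightarrow> real \<Rightarrow> real \<Rightarrow> bool" where
  "SQ_fin _ r s \<longleftrightarrow>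
     (\<forall>A::'a set. A \<subseteq> sphere 0 1 \<and> finite A \<longrightarrow>
        (\<exists>y\<in>sphere 0 1. \<forall>x\<in>A. norm (r *\<^sub>R x + s *\<^sub>R y) \<le> 1 \<and> norm (r *\<^sub>R x - s *\<^sub>R y) \<le> 1))"

definition SQ_fin_one_lt1 :: "'a::real_normed_vector itself \<Rightarrow> bool" where
  "SQ_fin_one_lt1 T \<longleftrightarrow> (\<forall>t\<in>{0<..<1}. SQ_fin T 1 t)"

definition SQ_fin_lt1_one :: "'a::real_normed_vector itself \<Rightarrow> bool" where
  "SQ_fin_lt1_one T \<longleftrightarrow> (\<forall>t\<in>{0<..<1}. SQ_fin T t 1)"

definition strictly_convex_space :: "'a::real_normed_vector itself \<Rightarrow> bool" where
  "strictly_convex_space _ \<longleftrightarrow>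
     (\<forall>x::'a. \<forall>y. norm x = 1 \<and> norm y = 1 \<and> x \<noteq> y \<longrightarrow> norm (x + y) < 2)"

end

theory Submission
  imports Defs
begin

text \<open>Applying SQ_1 to a single unit vector \<open>x\<close> yields a unit vector \<open>y\<close> such that
  \<open>x \<plusminus> k y\<close> (resp. \<open>y \<plusminus> k x\<close>) lie in the unit ball: a point of the unit sphere is the
  midpoint of a nondegenerate segment in the ball. In (a) this means no point of the sphere
  is extreme, and interior points of the ball never are. In (b) the two endpoints have sum
  of norm 2, so both lie on the sphere, contradicting strict convexity.\<close>

lemma SQ_fin_imp_SQ_1: "SQ_fin T r s \<Longrightarrow> SQ_1 T r s"
  unfolding SQ_fin_def SQ_1_def by blast

lemma SQ_1_imp_sphere_nonempty:
  assumes "SQ_1 TYPE('a::real_normed_vector) r s"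
  obtains y :: "'a::real_normed_vector" where "norm y = 1"
  using assms[unfolded SQ_1_def, rule_format, of "{}"] by auto

lemma SQ_1_singletonD:
  fixes x :: "'a::real_normed_vector"
  assumes "SQ_1 TYPE('a) r s" and "norm x = 1"
  obtains y :: "'a::real_normed_vector"
  where "norm y = 1" "norm (r *\<^sub>R x + s *\<^sub>R y) \<le> 1" "norm (r *\<^sub>R x - s *\<^sub>R y) \<le> 1"
  using assms(1)[unfolded SQ_1_def, rule_format, of "{x}"] assms(2) by auto

lemma add_eq_diff_iff: "(x::'a::real_vector) + d = x - d \<longleftrightarrow> d = 0"
proof -
  have "(x + d) - (x - d) = 2 *\<^sub>R d"
    by (simp add: scaleR_2)
  then show ?thesis
    by (metis diff_self scaleR_eq_0_iff zero_neq_numeral diff_0_right add_0_right)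
qed

lemma not_extreme_point_if_midpoint:
  fixes x d :: "'a::real_vector"
  assumes "d \<noteq> 0" and "x + d \<in> S" and "x - d \<in> S"
  shows "\<not> x extreme_point_of S"
proof -
  have "midpoint (x + d) (x - d) = x"
    by (simp add: midpoint_def scaleR_2 flip: scaleR_add_right)
  moreover have "x + d \<noteq> x - d"
    using assms(1) add_eq_diff_iff by blast
  ultimately have "x \<in> open_segment (x + d) (x - d)"
    using midpoint_in_open_segment by metis
  with assms(2,3) show ?thesis
    by (auto simp: extreme_point_of_def)
qed

lemma not_extreme_point_of_cball_if_norm_less:
  fixes x u :: "'a::real_normed_vector"
  assumes "norm x < 1" and "u \<noteq> 0"
  shows "\<not> x extreme_point_of cball 0 1"
proof
  assume extreme: "x extreme_point_of cball 0 1"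
  have "0 \<in> cball (0::'a) 1" and "u /\<^sub>R norm u \<in> cball 0 1"
    using assms(2) by auto
  moreover have "u /\<^sub>R norm u \<noteq> 0"
    using assms(2) by simp
  ultimately have "cball 0 1 \<noteq> {x}"
    by (metis singletonD)
  moreover have "x \<in> interior (cball 0 1)"
    using assms(1) by (intro interiorI[of "ball 0 1"]) auto
  then have "x \<in> rel_interior (cball 0 1)"
    using interior_subset_rel_interior by blast
  ultimately show False
    using extreme extreme_point_not_in_REL_INTERIOR by blast
qed

lemma not_strictly_convex_if_unit_midpoint:
  fixes x d :: "'a::real_normed_vector"
  assumes "norm x = 1" and "d \<noteq> 0" and "norm (x + d) \<le> 1" and "norm (x - d) \<le> 1"
  shows "\<not> strictly_convex_space TYPE('a)"
proof
  assume strictly_convex: "strictly_convex_space TYPE('a)"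
  have sum: "(x + d) + (x - d) = 2 *\<^sub>R x"
    by (simp add: scaleR_2)
  have "2 = norm ((x + d) + (x - d))"
    using sum assms(1) by simp
  also have "\<dots> \<le> norm (x + d) + norm (x - d)"
    by (rule norm_triangle_ineq)
  finally have "norm (x + d) = 1" "norm (x - d) = 1"
    using assms(3,4) by linarith+
  moreover have "x + d \<noteq> x - d"
    using assms(2) add_eq_diff_iff by blast
  ultimately have "norm ((x + d) + (x - d)) < 2"
    using strictly_convex unfolding strictly_convex_space_def by blast
  with sum assms(1) show False
    by simp
qed

lemma SQ_1_one_imp_no_extreme_point:
  assumes "k \<noteq> 0" and "SQ_1 TYPE('a::real_normed_vector) 1 k"
  shows "\<not> (x::'a) extreme_point_of cball 0 1"
proof -
  consider "norm x > 1" | "norm x < 1" | "norm x = 1"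
    by linarith
  then show ?thesis
  proof cases
    case 1
    then show ?thesis
      by (auto simp: extreme_point_of_def)
  next
    case 2
    obtain u :: 'a where "norm u = 1"
      using SQ_1_imp_sphere_nonempty[OF assms(2)] .
    then have "u \<noteq> 0"
      by auto
    with 2 show ?thesis
      by (rule not_extreme_point_of_cball_if_norm_less)
  next
    case 3
    then obtain y :: 'a where y: "norm y = 1" "norm (x + k *\<^sub>R y) \<le> 1" "norm (x - k *\<^sub>R y) \<le> 1"
      using SQ_1_singletonD[OF assms(2)] by auto
    moreover have "k *\<^sub>R y \<noteq> 0"
      using assms(1) y(1) by auto
    ultimately show ?thesis
      using not_extreme_point_if_midpoint[of "k *\<^sub>R y" x "cball 0 1"] by auto
  qed
qed

lemma SQ_1_imp_not_strictly_convex: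
  assumes "k \<noteq> 0" and "SQ_1 TYPE('a::real_normed_vector) k 1"
  shows "\<not> strictly_convex_space TYPE('a)"
proof -
  obtain x :: 'a where x: "norm x = 1"
    using SQ_1_imp_sphere_nonempty[OF assms(2)] .
  then obtain y :: 'a where "norm y = 1" "norm (k *\<^sub>R x + y) \<le> 1" "norm (k *\<^sub>R x - y) \<le> 1"
    using SQ_1_singletonD[OF assms(2)] by auto
  moreover have "k *\<^sub>R x \<noteq> 0"
    using assms(1) x by auto
  ultimately show ?thesis
    using not_strictly_convex_if_unit_midpoint[of y "k *\<^sub>R x"]
    by (simp add: add.commute norm_minus_commute)
qed

theorem lemma6p5:
  shows "((\<exists>k\<in>{0<..1}. SQ_1 TYPE('a::banach) 1 k) \<longrightarrow> (\<forall>x::'a. \<not> x extreme_point_of cball 0 1))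
       \<and> (SQ_fin_one_lt1 TYPE('a) \<longrightarrow> (\<forall>x::'a. \<not> x extreme_point_of cball 0 1))
       \<and> ((\<exists>k\<in>{0<..1}. SQ_1 TYPE('a) k 1) \<longrightarrow> \<not> strictly_convex_space TYPE('a))
       \<and> (SQ_fin_lt1_one TYPE('a) \<longrightarrow> \<not> strictly_convex_space TYPE('a))"
proof (intro conjI impI allI)
  have half: "(1/2::real) \<in> {0<..<1}"
    by simp
  have SQ_1_one_half: "SQ_1 T 1 (1/2)" if "SQ_fin_one_lt1 T" for T :: "'a itself"
    using that half by (intro SQ_fin_imp_SQ_1) (auto simp: SQ_fin_one_lt1_def)
  have SQ_1_half_one: "SQ_1 T (1/2) 1" if "SQ_fin_lt1_one T" for T :: "'a itself"
    using that half by (intro SQ_fin_imp_SQ_1) (auto simp: SQ_fin_lt1_one_def)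
  show "\<not> x extreme_point_of cball 0 1" if "\<exists>k\<in>{0<..1}. SQ_1 TYPE('a) 1 k" for x :: 'a
    using that SQ_1_one_imp_no_extreme_point by (metis greaterThanAtMost_iff less_numeral_extra(3))
  show "\<not> x extreme_point_of cball 0 1" if "SQ_fin_one_lt1 TYPE('a)" for x :: 'a
    by (rule SQ_1_one_imp_no_extreme_point[of "1/2"]) (simp_all add: SQ_1_one_half that)
  show "\<not> strictly_convex_space TYPE('a)" if "\<exists>k\<in>{0<..1}. SQ_1 TYPE('a) k 1"
    using that SQ_1_imp_not_strictly_convex by (metis greaterThanAtMost_iff less_numeral_extra(3))
  show "\<not> strictly_convex_space TYPE('a)" if "SQ_fin_lt1_one TYPE('a)"
    by (rule SQ_1_imp_not_strictly_convex[of "1/2"]) (simp_all add: SQ_1_half_one that)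
qed

end
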